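(* In the setting described in the context, suppose $m>p\ge2$, $0\le w_l<1$ for each $l=1,\ldots,m$, and $f(\mathbf{w})>0$. Fix $i\in\{1,\ldots,m\}$ and let $a,b,A,B$ be as defined in the context. Then the solution of $\max_{0\le x\le1}h_i(x)$ belongs to one of the following four cases: (1) If $A\ne B$, $A>0$, $B>0$, $a>b$, $aB>bA$, and $bA<(a-b)B$, then \[ \max_{0\le x\le1}h_i(x)=\left(\frac{\sqrt{A(a-b)}-\sqrt{aB-bA}}{A-B}\right)^2, \] attained uniquely at $x_*=\frac{t_*-B}{A-B}\in(0,1)$, where $t_*=\sqrt{\frac{A(aB-bA)}{a-b}}\in(\min\{A,B\},\max\{A,B\})$; (2) If $A=B$ and $a>2b$, then $\max_{0\le x\le1}h_i(x)=\frac{a^2}{4(a-b)B}>0$, attained uniquely at $x_*=\frac{a-2b}{2a-2b}\in(0,1)$; (3) If $A\ne B$, $B=0$, and $b=0$, then $\max_{0\le x\le1}h_i(x)=\frac{a}{A}>0$, attained uniquely at $x_*=0$; (4) For all other cases, $\max_{0\le x\le1}h_i(x)=\frac{b}{B}>0$, attained at the unique $x_*=0$.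
   Context: Given a model matrix $\mathbf{X}\in\mathbb{R}^{m\times p}$ (rows $\mathbf{q}(\mathbf{x}_i)^T$ for distinct design points under a generalized linear model) and numbers $\nu_1,\ldots,\nu_m\ge0$ (where $\nu_i=(\partial\mu_i/\partial\eta_i)^2/\mathrm{Var}(Y_i)$), for $\mathbf{w}=(w_1,\ldots,w_m)^T$ with $w_l\ge0$, $\sum_lw_l=1$, let $\mathbf{W}=\mathrm{diag}\{w_1\nu_1,\ldots,w_m\nu_m\}$, $f(\mathbf{w})=|\mathbf{X}^T\mathbf{W}\mathbf{X}|$, $f_{-j}(\mathbf{w})=|\mathbf{X}_{-j}^T\mathbf{W}\mathbf{X}_{-j}|$ for $j=1,\ldots,p$ (with $\mathbf{X}_{-j}$ being $\mathbf{X}$ with its $j$th column removed), and $h(\mathbf{w})=[\mathrm{tr}((\mathbf{X}^T\mathbf{W}\mathbf{X})^{-1})]^{-1}$ if $f(\mathbf{w})>0$, $h(\mathbf{w})=0$ otherwise. For $i$ with $0\le w_i<1$ and $x\in[0,1]$, let $\mathbf{w}^{(i)}(x)=\big(\tfrac{1-x}{1-w_i}w_1,\ldots,\tfrac{1-x}{1-w_i}w_{i-1},x,\tfrac{1-x}{1-w_i}w_{i+1},\ldots,\tfrac{1-x}{1-w_i}w_m\big)^T$, $f_i(x)=f(\mathbf{w}^{(i)}(x))$, $f_i^{(-j)}(x)=f_{-j}(\mathbf{w}^{(i)}(x))$, and $h_i(x)=h(\mathbf{w}^{(i)}(x))$. Define constants: if $0<w_i<1$, $b=f_i(0)$, $a=[f(\mathbf{w})-b(1-w_i)^p]/[w_i(1-w_i)^{p-1}]$,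 $b_j=f_i^{(-j)}(0)$, $a_j=[f_{-j}(\mathbf{w})-b_j(1-w_i)^{p-1}]/[w_i(1-w_i)^{p-2}]$; if $w_i=0$, $b=f(\mathbf{w})$, $a=2^pf_i(1/2)-b$, $b_j=f_{-j}(\mathbf{w})$, $a_j=2^{p-1}f_i^{(-j)}(1/2)-b_j$. (Then $f_i(x)=ax(1-x)^{p-1}+b(1-x)^p$ and $f_i^{(-j)}(x)=a_jx(1-x)^{p-2}+b_j(1-x)^{p-1}$ with all these constants nonnegative.) Finally let $A=\sum_{j=1}^pa_j$ and $B=\sum_{j=1}^pb_j$. *)

theory Defs
  imports "Jordan_Normal_Form.Determinant" "Jordan_Normal_Form.Gauss_Jordan_Elimination"
begin

(* Conventions: the model matrix X is an m x p JNF matrix (rows/cols indexed from 0),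
   weights w and numbers nu are functions nat => real, only their values at 0..<m matter.
   Design-point index i and column index j are 0-based. *)

definition mtrace :: "real mat \<Rightarrow> real" where
  "mtrace M = (\<Sum>k<dim_row M. M $$ (k,k))"

definition Wmat :: "nat \<Rightarrow> (nat \<Rightarrow> real) \<Rightarrow> (nat \<Rightarrow> real) \<Rightarrow> real mat" where
  "Wmat m nu w = mat m m (\<lambda>(r,c). if r = c then w r * nu r else 0)"

definition info_mat :: "real mat \<Rightarrow> (nat \<Rightarrow> real) \<Rightarrow> (nat \<Rightarrow> real) \<Rightarrow> real mat" where
  "info_mat X nu w = transpose_mat X * Wmat (dim_row X) nu w * X"

definition fdet :: "real mat \<Rightarrow> (nat \<Rightarrow> real) \<Rightarrow> (nat \<Rightarrow> real) \<Rightarrow> real" where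
  "fdet X nu w = det (info_mat X nu w)"

definition del_col :: "real mat \<Rightarrow> nat \<Rightarrow> real mat" where
  "del_col X j = mat (dim_row X) (dim_col X - 1) (\<lambda>(r,c). X $$ (r, if c < j then c else Suc c))"

definition fdet_minus :: "real mat \<Rightarrow> (nat \<Rightarrow> real) \<Rightarrow> (nat \<Rightarrow> real) \<Rightarrow> nat \<Rightarrow> real" where
  "fdet_minus X nu w j = fdet (del_col X j) nu w"

definition hfun :: "real mat \<Rightarrow> (nat \<Rightarrow> real) \<Rightarrow> (nat \<Rightarrow> real) \<Rightarrow> real" where
  "hfun X nu w = (if fdet X nu w > 0
      then 1 / mtrace (the (mat_inverse (info_mat X nu w))) else 0)"

definition wpath :: "(nat \<Rightarrow> real) \<Rightarrow> nat \<Rightarrow> real \<Rightarrow> (nat \<Rightarrow> real)" where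
  "wpath w i x = (\<lambda>l. if l = i then x else (1 - x) / (1 - w i) * w l)"

definition b_const :: "real mat \<Rightarrow> (nat \<Rightarrow> real) \<Rightarrow> (nat \<Rightarrow> real) \<Rightarrow> nat \<Rightarrow> real" where
  "b_const X nu w i = (if w i = 0 then fdet X nu w else fdet X nu (wpath w i 0))"

definition a_const :: "real mat \<Rightarrow> (nat \<Rightarrow> real) \<Rightarrow> (nat \<Rightarrow> real) \<Rightarrow> nat \<Rightarrow> real" where
  "a_const X nu w i = (let p = dim_col X; b = b_const X nu w i in
     if w i = 0 then 2 ^ p * fdet X nu (wpath w i (1/2)) - b
     else (fdet X nu w - b * (1 - w i) ^ p) / (w i * (1 - w i) ^ (p - 1)))"

definition bj_const :: "real mat \<Rightarrow> (nat \<Rightarrow> real) \<Rightarrow> (nat \<Rightarrow> real) \<Rightarrow> nat \<Rightarrow> nat \<Rightarrow> real" where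
  "bj_const X nu w i j = (if w i = 0 then fdet_minus X nu w j else fdet_minus X nu (wpath w i 0) j)"

definition aj_const :: "real mat \<Rightarrow> (nat \<Rightarrow> real) \<Rightarrow> (nat \<Rightarrow> real) \<Rightarrow> nat \<Rightarrow> nat \<Rightarrow> real" where
  "aj_const X nu w i j = (let p = dim_col X; bj = bj_const X nu w i j in
     if w i = 0 then 2 ^ (p - 1) * fdet_minus X nu (wpath w i (1/2)) j - bj
     else (fdet_minus X nu w j - bj * (1 - w i) ^ (p - 1)) / (w i * (1 - w i) ^ (p - 2)))"

definition A_const :: "real mat \<Rightarrow> (nat \<Rightarrow> real) \<Rightarrow> (nat \<Rightarrow> real) \<Rightarrow> nat \<Rightarrow> real" where
  "A_const X nu w i = (\<Sum>j<dim_col X. aj_const X nu w i j)"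

definition B_const :: "real mat \<Rightarrow> (nat \<Rightarrow> real) \<Rightarrow> (nat \<Rightarrow> real) \<Rightarrow> nat \<Rightarrow> real" where
  "B_const X nu w i = (\<Sum>j<dim_col X. bj_const X nu w i j)"

definition unique_max_on01 :: "(real \<Rightarrow> real) \<Rightarrow> real \<Rightarrow> real \<Rightarrow> bool" where
  "unique_max_on01 g xs v \<longleftrightarrow> 0 \<le> xs \<and> xs \<le> 1 \<and> g xs = v \<and>
      (\<forall>x. 0 \<le> x \<and> x \<le> 1 \<and> x \<noteq> xs \<longrightarrow> g x < v)"

end

(* Along the path w^(i)(x) the information matrix is (1 - x) times a rank-one update of its
   value at x = 0, so by the matrix determinant lemma f_i(x) = (1-x)^(p-1) ((1-x) b + x a) and
   sum_j f_i^(-j)(x) = (1-x)^(p-2) ((1-x) B + x A), all coefficients being nonnegative since the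
   determinants involved are Gram determinants.  Cramer's rule gives h = f / sum_j f_(-j), hence
   h_i(x) = (1-x) ((1-x) b + x a) / ((1-x) B + x A), and completing squares solves the resulting
   one-dimensional problem.  The degenerate patterns B = 0 and A = 0 < a are excluded by the bound
   h(w) |u|^2 <= u' (X'WX) u, i.e. 1 / tr(M^-1) is at most the least eigenvalue of M, applied along
   the path near its two end points. *)

theory Submission
  imports Defs "HOL-Analysis.Convex"
begin

section \<open>Determinants and quadratic forms\<close>

lemma det_first_row_unit:
  fixes A :: "real mat"
  assumes A: "A \<in> carrier_mat (Suc n) (Suc n)" and row: "\<And>c. 0 < c \<Longrightarrow> c < Suc n \<Longrightarrow> A $$ (0,c) = 0"
  shows "det A = A $$ (0,0) * det (mat_delete A 0 0)"
proof -
  have "det A = (\<Sum>c<Suc n. A $$ (0,c) * cofactor A 0 c)"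
    by (rule laplace_expansion_row[OF A]) simp
  also have "\<dots> = A $$ (0,0) * cofactor A 0 0"
    using row by (subst sum.lessThan_Suc_shift) simp
  finally show ?thesis by (simp add: cofactor_def)
qed

lemma det_first_col_unit:
  fixes A :: "real mat"
  assumes A: "A \<in> carrier_mat (Suc n) (Suc n)" and col: "\<And>r. 0 < r \<Longrightarrow> r < Suc n \<Longrightarrow> A $$ (r,0) = 0"
  shows "det A = A $$ (0,0) * det (mat_delete A 0 0)"
proof -
  have "det A = (\<Sum>r<Suc n. A $$ (r,0) * cofactor A r 0)"
    by (rule laplace_expansion_column[OF A]) simp
  also have "\<dots> = A $$ (0,0) * cofactor A 0 0"
    using col by (subst sum.lessThan_Suc_shift) simp
  finally show ?thesis by (simp add: cofactor_def)
qed

text \<open>The matrix [[1, -t v'], [v, G]], whose Schur complement with respect to the corner entry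
  is the rank-one update G + t v v'.\<close>
definition bordered_mat :: "nat \<Rightarrow> real mat \<Rightarrow> real \<Rightarrow> (nat \<Rightarrow> real) \<Rightarrow> real mat" where
  "bordered_mat n G t v = mat (Suc n) (Suc n) (\<lambda>(r,c).
     if r = 0 then (if c = 0 then 1 else - t * v (c-1))
     else if c = 0 then v (r-1) else G $$ (r-1,c-1))"

lemma det_bordered_mat_schur:
  assumes G: "G \<in> carrier_mat n n"
  shows "det (bordered_mat n G t v) = det (mat n n (\<lambda>(r,c). G $$ (r,c) + t * v r * v c))"
proof -
  define L where "L = mat (Suc n) (Suc n)
    (\<lambda>(r,c). if r = c then 1 else if c = 0 then v (r-1) else (0::real))"
  define C where "C = mat (Suc n) (Suc n)
    (\<lambda>(r,c). if r = 0 then (if c = 0 then 1 else - t * v (c-1))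
      else if c = 0 then 0 else G $$ (r-1,c-1) + t * v (r-1) * v (c-1))"
  have Lc: "L \<in> carrier_mat (Suc n) (Suc n)" and Cc: "C \<in> carrier_mat (Suc n) (Suc n)"
    unfolding L_def C_def by auto
  have "bordered_mat n G t v = L * C"
  proof (rule eq_matI)
    fix r c assume "r < dim_row (L * C)" and "c < dim_col (L * C)"
    hence r: "r < Suc n" and c: "c < Suc n" using Lc Cc by auto
    have "(L * C) $$ (r,c) = (\<Sum>k<Suc n. L $$ (r,k) * C $$ (k,c))"
      using Lc Cc r c by (auto simp: scalar_prod_def atLeast0LessThan)
    also have "\<dots> = (\<Sum>k<Suc n. (if k = r then C $$ (r,c) else 0)
        + (if k = 0 \<and> r \<noteq> 0 then v (r-1) * C $$ (0,c) else 0))"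
      using r by (intro sum.cong) (auto simp: L_def)
    also have "\<dots> = C $$ (r,c) + (if r \<noteq> 0 then v (r-1) * C $$ (0,c) else 0)"
      using r by (simp add: sum.distrib)
    also have "\<dots> = bordered_mat n G t v $$ (r,c)"
      using r c by (auto simp: C_def bordered_mat_def)
    finally show "bordered_mat n G t v $$ (r,c) = (L * C) $$ (r,c)" ..
  qed (use Lc Cc in \<open>auto simp: bordered_mat_def\<close>)
  moreover have "det L = 1"
  proof -
    have "mat_delete L 0 0 = 1\<^sub>m n"
      by (rule eq_matI) (auto simp: mat_delete_def L_def)
    thus ?thesis using det_first_row_unit[OF Lc] by (simp add: L_def)
  qed
  moreover have "det C = det (mat n n (\<lambda>(r,c). G $$ (r,c) + t * v r * v c))"
  proof -
    have "mat_delete C 0 0 = mat n n (\<lambda>(r,c). G $$ (r,c) + t * v r * v c)"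
      by (rule eq_matI) (auto simp: mat_delete_def C_def)
    thus ?thesis using det_first_col_unit[OF Cc] by (simp add: C_def)
  qed
  ultimately show ?thesis using det_mult[OF Lc Cc] by simp
qed

lemma det_bordered_mat_minor:
  assumes G: "G \<in> carrier_mat n n" and c: "c < n"
  shows "det (mat_delete (bordered_mat n G t v) 0 (Suc c)) =
    (\<Sum>r<n. v r * (-1)^r * det (mat_delete G r c))"
proof -
  define E where "E = mat_delete (bordered_mat n G t v) 0 (Suc c)"
  have Ec: "E \<in> carrier_mat n n"
    unfolding E_def bordered_mat_def using mat_delete_carrier[of _ "Suc n" "Suc n"] by auto
  have "det E = (\<Sum>r<n. E $$ (r,0) * cofactor E r 0)"
    by (rule laplace_expansion_column[OF Ec]) (use c in simp)
  also have "\<dots> = (\<Sum>r<n. v r * (-1)^r * det (mat_delete G r c))"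
  proof (intro sum.cong refl)
    fix r assume r: "r \<in> {..<n}"
    have "mat_delete E r 0 = mat_delete G r c"
      by (rule eq_matI) (use r c G in \<open>auto simp: E_def bordered_mat_def mat_delete_def\<close>)
    moreover have "E $$ (r,0) = v r"
      using r c unfolding E_def bordered_mat_def mat_delete_def by auto
    ultimately show "E $$ (r,0) * cofactor E r 0 = v r * (-1)^r * det (mat_delete G r c)"
      by (simp add: cofactor_def)
  qed
  finally show ?thesis unfolding E_def .
qed

lemma det_bordered_mat_laplace:
  assumes G: "G \<in> carrier_mat n n"
  shows "det (bordered_mat n G t v) = det G + t * (\<Sum>r<n. \<Sum>c<n. v r * v c * cofactor G r c)"
proof -
  define Bm where "Bm = bordered_mat n G t v"
  have Bc: "Bm \<in> carrier_mat (Suc n) (Suc n)" unfolding Bm_def bordered_mat_def by auto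
  have corner: "mat_delete Bm 0 0 = G"
    by (rule eq_matI) (use G in \<open>auto simp: Bm_def bordered_mat_def mat_delete_def\<close>)
  have "det Bm = (\<Sum>c<Suc n. Bm $$ (0,c) * cofactor Bm 0 c)"
    by (rule laplace_expansion_row[OF Bc]) simp
  also have "\<dots> = Bm $$ (0,0) * cofactor Bm 0 0 + (\<Sum>c<n. Bm $$ (0,Suc c) * cofactor Bm 0 (Suc c))"
    by (rule sum.lessThan_Suc_shift)
  also have "Bm $$ (0,0) * cofactor Bm 0 0 = det G"
    using corner by (simp add: cofactor_def Bm_def bordered_mat_def)
  also have "(\<Sum>c<n. Bm $$ (0,Suc c) * cofactor Bm 0 (Suc c))
      = (\<Sum>c<n. t * (\<Sum>r<n. v r * v c * cofactor G r c))"
  proof (intro sum.cong refl)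
    fix c assume c: "c \<in> {..<n}"
    have "Bm $$ (0,Suc c) * cofactor Bm 0 (Suc c) =
        (- t * v c) * ((-1)^(Suc c) * (\<Sum>r<n. v r * (-1)^r * det (mat_delete G r c)))"
      using c det_bordered_mat_minor[OF G, of c t v]
      by (simp add: Bm_def bordered_mat_def cofactor_def)
    also have "\<dots> = t * (\<Sum>r<n. v r * v c * ((-1)^(r+c) * det (mat_delete G r c)))"
      by (simp add: sum_distrib_left power_add mult_ac)
    finally show "Bm $$ (0,Suc c) * cofactor Bm 0 (Suc c) = t * (\<Sum>r<n. v r * v c * cofactor G r c)"
      by (simp add: cofactor_def)
  qed
  also have "\<dots> = t * (\<Sum>c<n. \<Sum>r<n. v r * v c * cofactor G r c)"
    by (simp add: sum_distrib_left)
  also have "\<dots> = t * (\<Sum>r<n. \<Sum>c<n. v r * v c * cofactor G r c)"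
    by (subst sum.swap) (rule refl)
  finally show ?thesis unfolding Bm_def .
qed

lemma det_rank_one_update:
  fixes G :: "real mat"
  assumes "G \<in> carrier_mat n n"
  shows "det (mat n n (\<lambda>(r,c). G $$ (r,c) + t * v r * v c)) =
         det G + t * (\<Sum>r<n. \<Sum>c<n. v r * v c * cofactor G r c)"
  using det_bordered_mat_schur[OF assms] det_bordered_mat_laplace[OF assms] by simp

lemma det_rank_one_eq_0:
  fixes v :: "nat \<Rightarrow> real"
  assumes k: "k \<ge> 2"
  shows "det (mat k k (\<lambda>(r,c). t * v r * v c)) = 0"
proof -
  let ?Z = "0\<^sub>m k k :: real mat"
  have "cofactor ?Z r c = 0" for r c
  proof -
    have "mat_delete ?Z r c = 0\<^sub>m (k - 1) (k - 1)" by (rule eq_matI) (auto simp: mat_delete_def)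
    thus ?thesis using k by (simp add: cofactor_def)
  qed
  moreover have "mat k k (\<lambda>(r,c). t * v r * v c) = mat k k (\<lambda>(r,c). ?Z $$ (r,c) + t * v r * v c)"
    by (rule eq_matI) auto
  ultimately show ?thesis using k by (simp add: det_rank_one_update)
qed

definition bilin_form :: "real mat \<Rightarrow> (nat \<Rightarrow> real) \<Rightarrow> (nat \<Rightarrow> real) \<Rightarrow> real" where
  "bilin_form M x y = (\<Sum>r<dim_row M. \<Sum>c<dim_col M. x r * M $$ (r,c) * y c)"

lemma bilin_form_mult_vec:
  assumes M: "M \<in> carrier_mat n n"
  shows "bilin_form M x y = (\<Sum>r<n. x r * (M *\<^sub>v vec n y) $ r)"
proof -
  have "(M *\<^sub>v vec n y) $ r = (\<Sum>c<n. M $$ (r,c) * y c)" if "r < n" for r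
    using M that by (auto simp: scalar_prod_def atLeast0LessThan intro!: sum.cong)
  thus ?thesis
    using M by (auto simp: bilin_form_def sum_distrib_left mult.assoc intro!: sum.cong)
qed

lemma sum_squares_vec_pos:
  fixes v :: "real vec"
  assumes "v \<in> carrier_vec n" and "v \<noteq> 0\<^sub>v n"
  shows "(\<Sum>r<n. (v $ r)\<^sup>2) > 0"
proof -
  obtain r where "r < n" "v $ r \<noteq> 0" using assms by (metis eq_vecI carrier_vecD index_zero_vec(1,2))
  thus ?thesis by (intro sum_pos2[where i = r]) auto
qed

lemma singular_imp_isotropic:
  assumes M: "M \<in> carrier_mat n n" and "det M = 0"
  obtains u where "bilin_form M u u = 0" and "(\<Sum>r<n. (u r)\<^sup>2) > 0"
proof -
  obtain v where v: "v \<in> carrier_vec n" "v \<noteq> 0\<^sub>v n" "M *\<^sub>v v = 0\<^sub>v n"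
    using det_0_iff_vec_prod_zero_field[OF M] assms(2) by blast
  have "vec n (($) v) = v" using v(1) by auto
  hence "bilin_form M (($) v) (($) v) = 0" using v(3) by (simp add: bilin_form_mult_vec[OF M])
  with sum_squares_vec_pos[OF v(1,2)] that show ?thesis by blast
qed

text \<open>The segment from the identity to M stays nonsingular before reaching M, so det M cannot
  have changed sign.\<close>
lemma det_nonneg_if_quad_nonneg:
  assumes M: "M \<in> carrier_mat n n" and psd: "\<And>u. bilin_form M u u \<ge> 0"
  shows "det M \<ge> 0"
proof (rule ccontr)
  assume neg: "\<not> det M \<ge> 0"
  define Q where
    "Q \<tau> = mat n n (\<lambda>(r,c). \<tau> * M $$ (r,c) + (if r = c then 1 - \<tau> else 0))" for \<tau> :: real
  have Qc: "Q \<tau> \<in> carrier_mat n n" for \<tau> unfolding Q_def by auto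
  have det_Q: "det (Q \<tau>) = (\<Sum>p\<in>{p. p permutes {0..<n}}. signof p *
      (\<Prod>i = 0..<n. \<tau> * M $$ (i,p i) + (if i = p i then 1 else 0) * (1 - \<tau>)))" for \<tau>
    unfolding det_def'[OF Qc]
    by (intro sum.cong refl arg_cong2[where f="(*)"] prod.cong) (auto simp: Q_def permutes_in_image)
  have "continuous_on {0..1} (\<lambda>\<tau>. det (Q \<tau>))"
    unfolding det_Q by (intro continuous_intros)
  moreover have "Q 0 = 1\<^sub>m n" by (auto intro!: eq_matI simp: Q_def)
  moreover have "Q 1 = M" by (rule eq_matI) (use M in \<open>auto simp: Q_def\<close>)
  ultimately obtain \<tau> where \<tau>: "0 \<le> \<tau>" "\<tau> \<le> 1" "det (Q \<tau>) = 0"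
    using IVT2'[of "\<lambda>\<tau>. det (Q \<tau>)" 1 0 0] neg by auto
  have "\<tau> \<noteq> 1" using \<tau>(3) \<open>Q 1 = M\<close> neg by auto
  obtain u where u0: "bilin_form (Q \<tau>) u u = 0" and U: "(\<Sum>r<n. (u r)\<^sup>2) > 0"
    using singular_imp_isotropic[OF Qc \<tau>(3)] .
  have "u r * Q \<tau> $$ (r,c) * u c =
      \<tau> * (u r * M $$ (r,c) * u c) + (if r = c then (1 - \<tau>) * (u r)\<^sup>2 else 0)"
    if "r < n" "c < n" for r c
    using that by (simp add: Q_def algebra_simps power2_eq_square)
  hence "bilin_form (Q \<tau>) u u = \<tau> * bilin_form M u u + (1 - \<tau>) * (\<Sum>r<n. (u r)\<^sup>2)"
    using M Qc[of \<tau>] by (simp add: bilin_form_def sum.distrib sum_distrib_left)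
  moreover have "\<tau> * bilin_form M u u \<ge> 0" using \<tau> psd by simp
  moreover have "(1 - \<tau>) * (\<Sum>r<n. (u r)\<^sup>2) > 0" using \<tau> \<open>\<tau> \<noteq> 1\<close> U by simp
  ultimately show False using u0 by linarith
qed

lemma exists_orthogonal:
  fixes v :: "nat \<Rightarrow> real"
  assumes k: "k \<ge> 2"
  obtains u where "(\<Sum>r<k. v r * u r) = 0" and "(\<Sum>r<k. (u r)\<^sup>2) > 0"
proof -
  let ?M = "mat k k (\<lambda>(r,c). v r * v c)"
  have "det ?M = 0" using det_rank_one_eq_0[OF k, of 1 v] by simp
  then obtain u where u: "bilin_form ?M u u = 0" "(\<Sum>r<k. (u r)\<^sup>2) > 0"
    using singular_imp_isotropic[of ?M k] by auto
  have "bilin_form ?M u u = (\<Sum>r<k. v r * u r)\<^sup>2"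
    by (simp add: bilin_form_def power2_eq_square sum_product mult_ac)
  with u that show ?thesis by simp
qed

section \<open>Information matrices\<close>

lemma info_mat_carrier: "Y \<in> carrier_mat m k \<Longrightarrow> info_mat Y nu d \<in> carrier_mat k k"
  unfolding info_mat_def Wmat_def by auto

lemma info_mat_entry:
  assumes Y: "Y \<in> carrier_mat m k" and r: "r < k" and c: "c < k"
  shows "info_mat Y nu d $$ (r,c) = (\<Sum>l<m. Y $$ (l,r) * (d l * nu l) * Y $$ (l,c))"
proof -
  let ?W = "Wmat m nu d"
  have W: "?W \<in> carrier_mat m m" unfolding Wmat_def by auto
  have YW: "(transpose_mat Y * ?W) $$ (r,l) = Y $$ (l,r) * (d l * nu l)" if l: "l < m" for l
  proof -
    have "(transpose_mat Y * ?W) $$ (r,l) = (\<Sum>s<m. Y $$ (s,r) * ?W $$ (s,l))"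
      using Y W r l by (auto simp: scalar_prod_def atLeast0LessThan intro!: sum.cong)
    also have "\<dots> = (\<Sum>s<m. if s = l then Y $$ (l,r) * (d l * nu l) else 0)"
      using l by (intro sum.cong) (auto simp: Wmat_def)
    finally show ?thesis using l by simp
  qed
  have "info_mat Y nu d $$ (r,c) = row (transpose_mat Y * ?W) r \<bullet> col Y c"
    unfolding info_mat_def carrier_matD(1)[OF Y] using Y W r c by (intro index_mult_mat) auto
  also have "\<dots> = (\<Sum>l<m. (transpose_mat Y * ?W) $$ (r,l) * Y $$ (l,c))"
    using Y W r c by (auto simp: scalar_prod_def atLeast0LessThan)
  also have "\<dots> = (\<Sum>l<m. Y $$ (l,r) * (d l * nu l) * Y $$ (l,c))"
    using YW by (intro sum.cong) auto
  finally show ?thesis .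
qed

lemma bilin_form_info_mat:
  assumes Y: "Y \<in> carrier_mat m k"
  shows "bilin_form (info_mat Y nu d) x y =
    (\<Sum>l<m. (d l * nu l) * (\<Sum>r<k. Y $$ (l,r) * x r) * (\<Sum>c<k. Y $$ (l,c) * y c))"
proof -
  have "bilin_form (info_mat Y nu d) x y =
      (\<Sum>r<k. \<Sum>c<k. \<Sum>l<m. (d l * nu l) * (Y $$ (l,r) * x r) * (Y $$ (l,c) * y c))"
    using info_mat_carrier[OF Y]
    by (auto simp: bilin_form_def info_mat_entry[OF Y] sum_distrib_left sum_distrib_right mult_ac
        intro!: sum.cong)
  also have "\<dots> = (\<Sum>l<m. \<Sum>r<k. \<Sum>c<k. (d l * nu l) * (Y $$ (l,r) * x r) * (Y $$ (l,c) * y c))"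
    by (subst sum.swap, subst (2) sum.swap) (rule refl)
  also have "\<dots> = (\<Sum>l<m. (d l * nu l) * (\<Sum>r<k. Y $$ (l,r) * x r) * (\<Sum>c<k. Y $$ (l,c) * y c))"
    by (simp add: sum_product sum_distrib_left mult_ac)
  finally show ?thesis .
qed

lemma info_mat_quad_nonneg:
  assumes Y: "Y \<in> carrier_mat m k" and nn: "\<forall>l<m. d l * nu l \<ge> 0"
  shows "bilin_form (info_mat Y nu d) u u \<ge> 0"
  unfolding bilin_form_info_mat[OF Y]
proof (intro sum_nonneg)
  fix l assume "l \<in> {..<m}"
  hence "0 \<le> (d l * nu l) * ((\<Sum>r<k. Y $$ (l,r) * u r) * (\<Sum>r<k. Y $$ (l,r) * u r))"
    using nn by (intro mult_nonneg_nonneg[OF _ zero_le_square]) auto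
  thus "0 \<le> (d l * nu l) * (\<Sum>r<k. Y $$ (l,r) * u r) * (\<Sum>c<k. Y $$ (l,c) * u c)"
    by (simp add: mult.assoc)
qed

lemma fdet_nonneg:
  assumes "Y \<in> carrier_mat m k" and "\<forall>l<m. d l * nu l \<ge> 0"
  shows "fdet Y nu d \<ge> 0"
  unfolding fdet_def
  by (rule det_nonneg_if_quad_nonneg[OF info_mat_carrier]) (use assms info_mat_quad_nonneg in auto)

lemma info_mat_cauchy_schwarz:
  assumes Y: "Y \<in> carrier_mat m k" and nn: "\<forall>l<m. d l * nu l \<ge> 0"
  shows "(bilin_form (info_mat Y nu d) x y)\<^sup>2 \<le>
    bilin_form (info_mat Y nu d) x x * bilin_form (info_mat Y nu d) y y"
proof -
  define s where "s l = sqrt (d l * nu l)" for l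
  have s2: "(s l)\<^sup>2 = d l * nu l" if "l < m" for l using nn that by (simp add: s_def)
  define X' where "X' x l = s l * (\<Sum>r<k. Y $$ (l,r) * x r)" for x l
  have gram: "bilin_form (info_mat Y nu d) x y = (\<Sum>l<m. X' x l * X' y l)" for x y
  proof -
    have "(d l * nu l) * (\<Sum>r<k. Y $$ (l,r) * x r) * (\<Sum>c<k. Y $$ (l,c) * y c) = X' x l * X' y l"
      if "l < m" for l
      unfolding X'_def s2[OF that, symmetric] by (simp add: power2_eq_square mult_ac)
    thus ?thesis unfolding bilin_form_info_mat[OF Y] by (auto intro!: sum.cong)
  qed
  show ?thesis
    unfolding gram power2_eq_square[symmetric] by (rule Cauchy_Schwarz_ineq_sum)
qed

lemma info_mat_quad_le_trace:
  assumes Y: "Y \<in> carrier_mat m k" and nn: "\<forall>l<m. d l * nu l \<ge> 0"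
  shows "bilin_form (info_mat Y nu d) u u \<le> (\<Sum>r<k. (u r)\<^sup>2) * mtrace (info_mat Y nu d)"
proof -
  have "bilin_form (info_mat Y nu d) u u = (\<Sum>l<m. (d l * nu l) * (\<Sum>r<k. Y $$ (l,r) * u r)\<^sup>2)"
    unfolding bilin_form_info_mat[OF Y] by (simp add: power2_eq_square mult.assoc)
  also have "\<dots> \<le> (\<Sum>l<m. (d l * nu l) * ((\<Sum>r<k. (Y $$ (l,r))\<^sup>2) * (\<Sum>r<k. (u r)\<^sup>2)))"
    using nn by (intro sum_mono mult_left_mono Cauchy_Schwarz_ineq_sum) auto
  also have "\<dots> = (\<Sum>r<k. (u r)\<^sup>2) * (\<Sum>l<m. \<Sum>r<k. Y $$ (l,r) * (d l * nu l) * Y $$ (l,r))"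
    by (simp add: sum_distrib_left sum_distrib_right power2_eq_square mult_ac)
  also have "\<dots> = (\<Sum>r<k. (u r)\<^sup>2) * (\<Sum>r<k. \<Sum>l<m. Y $$ (l,r) * (d l * nu l) * Y $$ (l,r))"
    by (subst sum.swap) (rule refl)
  also have "\<dots> = (\<Sum>r<k. (u r)\<^sup>2) * mtrace (info_mat Y nu d)"
    using info_mat_carrier[OF Y, of nu d] by (simp add: mtrace_def info_mat_entry[OF Y])
  finally show ?thesis .
qed

lemma info_mat_mult_right_inverse:
  assumes Y: "Y \<in> carrier_mat m k" and B: "B \<in> carrier_mat k k"
    and inv: "info_mat Y nu d * B = 1\<^sub>m k"
  shows "info_mat (Y * B) nu d = transpose_mat B"
proof -
  have W: "Wmat m nu d \<in> carrier_mat m m" unfolding Wmat_def by auto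
  have YW: "transpose_mat Y * Wmat m nu d \<in> carrier_mat k m" using Y W by auto
  have "info_mat (Y * B) nu d = (transpose_mat B * transpose_mat Y) * Wmat m nu d * (Y * B)"
    using Y B by (simp add: info_mat_def transpose_mult[OF Y B])
  also have "\<dots> = transpose_mat B * ((transpose_mat Y * Wmat m nu d) * (Y * B))"
    using Y B W YW by (simp add: assoc_mult_mat[of _ k k _ k _ m] assoc_mult_mat[of _ k k _ m _ k])
  also have "(transpose_mat Y * Wmat m nu d) * (Y * B) = info_mat Y nu d * B"
    using Y B YW by (simp add: info_mat_def assoc_mult_mat[of _ k m _ k _ k])
  finally have "info_mat (Y * B) nu d = transpose_mat B * (info_mat Y nu d * B)" .
  thus ?thesis using inv B by simp
qed

lemma bilin_form_transpose:
  assumes "M \<in> carrier_mat n n"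
  shows "bilin_form (transpose_mat M) x y = bilin_form M y x"
  using assms unfolding bilin_form_def
  by (subst sum.swap) (auto simp: mult_ac intro!: sum.cong)

lemma mtrace_transpose: "mtrace (transpose_mat M) = mtrace M" if "M \<in> carrier_mat n n"
  using that by (simp add: mtrace_def)

text \<open>Cauchy-Schwarz for the form of M at u and M\<inverse> u, combined with
  u' M\<inverse> u \<le> |u|^2 tr M\<inverse>, which holds because M\<inverse> = (Y M\<inverse>)' W (Y M\<inverse>) is
  again an information matrix.\<close>
lemma sumsq_le_quad_mult_trace_inverse:
  assumes Y: "Y \<in> carrier_mat m k" and nn: "\<forall>l<m. d l * nu l \<ge> 0"
    and B: "B \<in> carrier_mat k k" and inv: "info_mat Y nu d * B = 1\<^sub>m k"
    and U: "(\<Sum>r<k. (u r)\<^sup>2) > 0"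
  shows "(\<Sum>r<k. (u r)\<^sup>2) \<le> bilin_form (info_mat Y nu d) u u * mtrace B"
proof -
  define M where "M = info_mat Y nu d"
  define U where "U = (\<Sum>r<k. (u r)\<^sup>2)"
  define v where "v = B *\<^sub>v vec k u"
  have Mc: "M \<in> carrier_mat k k" unfolding M_def by (rule info_mat_carrier[OF Y])
  have vv: "vec k (($) v) = v" using B by (auto simp: v_def)
  have Mv: "M *\<^sub>v v = vec k u"
    using Mc B inv by (simp add: v_def M_def flip: assoc_mult_mat_vec[of _ k k _ k])
  have Muv: "bilin_form M u (($) v) = U"
    unfolding bilin_form_mult_vec[OF Mc] vv Mv by (simp add: U_def power2_eq_square)
  have Mvv: "bilin_form M (($) v) (($) v) = bilin_form B u u"
    unfolding bilin_form_mult_vec[OF Mc] bilin_form_mult_vec[OF B] vv Mv v_def[symmetric]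
    by (auto simp: mult.commute intro!: sum.cong)
  have "bilin_form B u u = bilin_form (info_mat (Y * B) nu d) u u"
    using info_mat_mult_right_inverse[OF Y B inv] bilin_form_transpose[OF B] by simp
  also have "\<dots> \<le> U * mtrace B"
    using info_mat_quad_le_trace[of "Y * B" m k d nu u] Y B nn
      info_mat_mult_right_inverse[OF Y B inv] mtrace_transpose[OF B] by (simp add: U_def)
  finally have BU: "bilin_form B u u \<le> U * mtrace B" .
  have "U\<^sup>2 \<le> bilin_form M u u * bilin_form B u u"
    using info_mat_cauchy_schwarz[OF Y nn, of u "($) v"] Muv Mvv by (simp add: M_def)
  also have "\<dots> \<le> bilin_form M u u * (U * mtrace B)"
    using BU info_mat_quad_nonneg[OF Y nn] by (simp add: M_def mult_left_mono)
  finally have "U * U \<le> U * (bilin_form M u u * mtrace B)" by (simp add: power2_eq_square mult_ac)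
  thus ?thesis using U by (simp add: M_def U_def)
qed

lemma info_mat_inverse:
  assumes Y: "Y \<in> carrier_mat m k" and f: "fdet Y nu d > 0"
  obtains B where "B \<in> carrier_mat k k" and "info_mat Y nu d * B = 1\<^sub>m k"
    and "hfun Y nu d = 1 / mtrace B"
proof -
  have Mc: "info_mat Y nu d \<in> carrier_mat k k" by (rule info_mat_carrier[OF Y])
  have "info_mat Y nu d \<in> Units (ring_mat TYPE(real) k ())"
    by (rule det_non_zero_imp_unit[OF Mc]) (use f in \<open>simp add: fdet_def\<close>)
  then obtain B where B: "mat_inverse (info_mat Y nu d) = Some B"
    using mat_inverse(1)[OF Mc, where b="()"] by (cases "mat_inverse (info_mat Y nu d)") auto
  moreover have "hfun Y nu d = 1 / mtrace B" using f B by (simp add: hfun_def)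
  ultimately show ?thesis using mat_inverse(2)[OF Mc B] that by blast
qed

lemma hfun_mult_sumsq_le:
  assumes Y: "Y \<in> carrier_mat m k" and nn: "\<forall>l<m. d l * nu l \<ge> 0"
  shows "hfun Y nu d * (\<Sum>r<k. (u r)\<^sup>2) \<le> bilin_form (info_mat Y nu d) u u"
proof (cases "fdet Y nu d > 0 \<and> (\<Sum>r<k. (u r)\<^sup>2) > 0")
  case True
  then obtain B where B: "B \<in> carrier_mat k k" "info_mat Y nu d * B = 1\<^sub>m k"
    and h: "hfun Y nu d = 1 / mtrace B"
    using info_mat_inverse[OF Y] by metis
  have le: "(\<Sum>r<k. (u r)\<^sup>2) \<le> bilin_form (info_mat Y nu d) u u * mtrace B"
    using sumsq_le_quad_mult_trace_inverse[OF Y nn B] True by blast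
  moreover have "mtrace B > 0"
    using le True info_mat_quad_nonneg[OF Y nn, of u]
    by (smt (verit, best) mult_nonneg_nonpos)
  ultimately show ?thesis unfolding h by (simp add: field_simps)
next
  case False
  moreover have "fdet Y nu d \<ge> 0" by (rule fdet_nonneg[OF Y nn])
  moreover have "(\<Sum>r<k. (u r)\<^sup>2) \<ge> 0" by (simp add: sum_nonneg)
  ultimately have "hfun Y nu d * (\<Sum>r<k. (u r)\<^sup>2) = 0" by (auto simp: hfun_def)
  thus ?thesis using info_mat_quad_nonneg[OF Y nn, of u] by auto
qed

lemma hfun_pos:
  assumes Y: "Y \<in> carrier_mat m k" and k: "k \<ge> 1" and nn: "\<forall>l<m. d l * nu l \<ge> 0"
    and f: "fdet Y nu d > 0"
  shows "hfun Y nu d > 0"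
proof -
  obtain B where B: "B \<in> carrier_mat k k" "info_mat Y nu d * B = 1\<^sub>m k"
    and h: "hfun Y nu d = 1 / mtrace B"
    using info_mat_inverse[OF Y f] by metis
  define u :: "nat \<Rightarrow> real" where "u r = (if r = 0 then 1 else 0)" for r
  have "(\<Sum>r<k. (u r)\<^sup>2) = (\<Sum>r<k. if r = 0 then 1 else 0)"
    by (intro sum.cong) (auto simp: u_def)
  hence U: "(\<Sum>r<k. (u r)\<^sup>2) = 1" using k by simp
  have "1 \<le> bilin_form (info_mat Y nu d) u u * mtrace B"
    using sumsq_le_quad_mult_trace_inverse[OF Y nn B, of u] U by simp
  hence "mtrace B > 0"
    using info_mat_quad_nonneg[OF Y nn, of u] by (smt (verit, best) mult_nonneg_nonpos)
  thus ?thesis unfolding h by simp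
qed

lemma del_col_carrier: "Y \<in> carrier_mat m k \<Longrightarrow> del_col Y j \<in> carrier_mat m (k - 1)"
  unfolding del_col_def by auto

lemma mat_delete_info_mat:
  assumes Y: "Y \<in> carrier_mat m k" and j: "j < k"
  shows "mat_delete (info_mat Y nu d) j j = info_mat (del_col Y j) nu d"
proof (rule eq_matI)
  have Dc: "del_col Y j \<in> carrier_mat m (k - 1)" by (rule del_col_carrier[OF Y])
  show "dim_row (mat_delete (info_mat Y nu d) j j) = dim_row (info_mat (del_col Y j) nu d)"
    "dim_col (mat_delete (info_mat Y nu d) j j) = dim_col (info_mat (del_col Y j) nu d)"
    using info_mat_carrier[OF Y, of nu d] info_mat_carrier[OF Dc, of nu d] by auto
  fix r c
  assume "r < dim_row (info_mat (del_col Y j) nu d)" "c < dim_col (info_mat (del_col Y j) nu d)"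
  hence r: "r < k - 1" and c: "c < k - 1" using info_mat_carrier[OF Dc, of nu d] by auto
  have "mat_delete (info_mat Y nu d) j j $$ (r,c)
      = info_mat Y nu d $$ (if r < j then r else Suc r, if c < j then c else Suc c)"
    using r c info_mat_carrier[OF Y, of nu d] by (auto simp: mat_delete_def)
  also have "\<dots> = (\<Sum>l<m. Y $$ (l, if r < j then r else Suc r) * (d l * nu l) *
      Y $$ (l, if c < j then c else Suc c))"
    by (rule info_mat_entry[OF Y]) (use r c in auto)
  also have "\<dots> = info_mat (del_col Y j) nu d $$ (r,c)"
    unfolding info_mat_entry[OF Dc r c] using r c Y by (intro sum.cong) (auto simp: del_col_def)
  finally show "mat_delete (info_mat Y nu d) j j $$ (r,c) = info_mat (del_col Y j) nu d $$ (r,c)" .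
qed

lemma hfun_eq_fdet_div:
  assumes Y: "Y \<in> carrier_mat m k" and nn: "\<forall>l<m. d l * nu l \<ge> 0"
  shows "hfun Y nu d = fdet Y nu d / (\<Sum>j<k. fdet_minus Y nu d j)"
proof (cases "fdet Y nu d > 0")
  case True
  define M where "M = info_mat Y nu d"
  define f where "f = det M"
  have Mc: "M \<in> carrier_mat k k" unfolding M_def by (rule info_mat_carrier[OF Y])
  obtain B where B: "B \<in> carrier_mat k k" "M * B = 1\<^sub>m k" and h: "hfun Y nu d = 1 / mtrace B"
    using info_mat_inverse[OF Y True] unfolding M_def by metis
  have adjc: "adj_mat M \<in> carrier_mat k k" by (rule adj_mat(1)[OF Mc])
  have "adj_mat M = (adj_mat M * M) * B"
    using B adjc Mc by simp
  also have "\<dots> = f \<cdot>\<^sub>m B"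
    using adj_mat(3)[OF Mc] B by (simp add: f_def mult_smult_assoc_mat[OF one_carrier_mat B(1)])
  finally have adjB: "adj_mat M = f \<cdot>\<^sub>m B" .
  have "B $$ (c,c) = fdet_minus Y nu d c / f" if c: "c < k" for c
  proof -
    have "f * B $$ (c,c) = det (mat_delete M c c)"
      using arg_cong[OF adjB, of "\<lambda>A. A $$ (c,c)"] c Mc B by (simp add: adj_mat_def cofactor_def)
    thus ?thesis using True c
      by (simp add: M_def f_def fdet_minus_def fdet_def mat_delete_info_mat[OF Y] field_simps)
  qed
  hence "mtrace B = (\<Sum>j<k. fdet_minus Y nu d j) / f"
    using B by (simp add: mtrace_def sum_divide_distrib)
  thus ?thesis using h by (simp add: f_def M_def fdet_def)
next
  case False
  hence "fdet Y nu d = 0" using fdet_nonneg[OF Y nn] by simp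
  thus ?thesis by (simp add: hfun_def)
qed

section \<open>Moving along the path\<close>

lemma wpath_split: "wpath w i x l = (1 - x) * wpath w i 0 l + x * (if l = i then 1 else 0)"
  unfolding wpath_def by auto

lemma wpath_at_weight: "w i < 1 \<Longrightarrow> wpath w i (w i) = w"
  unfolding wpath_def by auto

lemma wpath_weights_nonneg:
  assumes "\<forall>l<m. 0 \<le> w l" and "\<forall>l<m. 0 \<le> nu l" and "w i < 1" and "0 \<le> x" and "x \<le> 1"
  shows "\<forall>l<m. 0 \<le> wpath w i x l * nu l"
  using assms unfolding wpath_def by auto

lemma info_mat_wpath_entry:
  assumes Y: "Y \<in> carrier_mat m k" and r: "r < k" and c: "c < k" and i: "i < m"
  shows "info_mat Y nu (wpath w i x) $$ (r,c) =
    (1 - x) * info_mat Y nu (wpath w i 0) $$ (r,c) + x * (nu i * Y $$ (i,r) * Y $$ (i,c))"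
proof -
  have "info_mat Y nu (wpath w i x) $$ (r,c) =
      (\<Sum>l<m. (1 - x) * (Y $$ (l,r) * (wpath w i 0 l * nu l) * Y $$ (l,c)) +
        (if l = i then x * (nu i * Y $$ (i,r) * Y $$ (i,c)) else 0))"
    unfolding info_mat_entry[OF Y r c]
    by (intro sum.cong refl) (auto simp: wpath_split[of w i x] algebra_simps)
  also have "\<dots> =
      (1 - x) * info_mat Y nu (wpath w i 0) $$ (r,c) + x * (nu i * Y $$ (i,r) * Y $$ (i,c))"
    using i by (simp add: sum.distrib sum_distrib_left info_mat_entry[OF Y r c])
  finally show ?thesis .
qed

lemma bilin_form_info_mat_wpath:
  assumes Y: "Y \<in> carrier_mat m k" and i: "i < m"
  shows "bilin_form (info_mat Y nu (wpath w i x)) u u =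
    (1 - x) * bilin_form (info_mat Y nu (wpath w i 0)) u u + x * nu i * (\<Sum>r<k. Y $$ (i,r) * u r)\<^sup>2"
proof -
  define P where "P l = (\<Sum>r<k. Y $$ (l,r) * u r)" for l
  have "bilin_form (info_mat Y nu (wpath w i x)) u u =
      (\<Sum>l<m. (1 - x) * (wpath w i 0 l * nu l * P l * P l) +
        (if l = i then x * nu i * (P i)\<^sup>2 else 0))"
    unfolding bilin_form_info_mat[OF Y] P_def[symmetric]
    by (intro sum.cong refl) (auto simp: wpath_split[of w i x] algebra_simps power2_eq_square)
  also have "\<dots> = (1 - x) * bilin_form (info_mat Y nu (wpath w i 0)) u u + x * nu i * (P i)\<^sup>2"
    using i by (simp add: sum.distrib sum_distrib_left bilin_form_info_mat[OF Y] P_def)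
  finally show ?thesis unfolding P_def .
qed

lemma fdet_wpath_affine:
  assumes Y: "Y \<in> carrier_mat m k" and k: "k \<ge> 1" and i: "i < m"
  obtains \<alpha> where "\<And>x. x \<noteq> 1 \<Longrightarrow>
    fdet Y nu (wpath w i x) = (1 - x)^k * fdet Y nu (wpath w i 0) + x * (1 - x)^(k-1) * \<alpha>"
proof -
  define G where "G = info_mat Y nu (wpath w i 0)"
  have Gc: "G \<in> carrier_mat k k" unfolding G_def by (rule info_mat_carrier[OF Y])
  define S where "S = (\<Sum>r<k. \<Sum>c<k. Y $$ (i,r) * Y $$ (i,c) * cofactor G r c)"
  have "fdet Y nu (wpath w i x) =
      (1 - x)^k * fdet Y nu (wpath w i 0) + x * (1 - x)^(k-1) * (nu i * S)"
    if x: "x \<noteq> 1" for x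
  proof -
    define t where "t = x * nu i / (1 - x)"
    have "info_mat Y nu (wpath w i x) =
        (1 - x) \<cdot>\<^sub>m mat k k (\<lambda>(r,c). G $$ (r,c) + t * Y $$ (i,r) * Y $$ (i,c))"
    proof (rule eq_matI)
      fix r c
      assume "r < dim_row ((1 - x) \<cdot>\<^sub>m mat k k (\<lambda>(r,c). G $$ (r,c) + t * Y $$ (i,r) * Y $$ (i,c)))"
        "c < dim_col ((1 - x) \<cdot>\<^sub>m mat k k (\<lambda>(r,c). G $$ (r,c) + t * Y $$ (i,r) * Y $$ (i,c)))"
      hence r: "r < k" and c: "c < k" by auto
      have "1 - x \<noteq> 0" using x by simp
      thus "info_mat Y nu (wpath w i x) $$ (r,c) =
          ((1 - x) \<cdot>\<^sub>m mat k k (\<lambda>(r,c). G $$ (r,c) + t * Y $$ (i,r) * Y $$ (i,c))) $$ (r,c)"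
        unfolding info_mat_wpath_entry[OF Y r c i, where x = x] using r c
        by (simp add: G_def t_def field_simps)
    qed (use info_mat_carrier[OF Y, of nu "wpath w i x"] in auto)
    hence "fdet Y nu (wpath w i x) = (1 - x)^k * (det G + t * S)"
      unfolding fdet_def S_def by (simp add: det_rank_one_update[OF Gc])
    also have "\<dots> = (1 - x)^k * det G + x * (1 - x)^(k-1) * (nu i * S)"
      using x k by (cases k) (auto simp: t_def field_simps)
    finally show ?thesis by (simp add: G_def fdet_def)
  qed
  thus ?thesis by (rule that)
qed

lemma fdet_wpath_one:
  assumes Y: "Y \<in> carrier_mat m k" and k: "k \<ge> 2" and i: "i < m"
  shows "fdet Y nu (wpath w i 1) = 0"
proof -
  have "info_mat Y nu (wpath w i 1) = mat k k (\<lambda>(r,c). nu i * Y $$ (i,r) * Y $$ (i,c))"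
  proof (rule eq_matI)
    fix r c assume "r < dim_row (mat k k (\<lambda>(r,c). nu i * Y $$ (i,r) * Y $$ (i,c)))"
      "c < dim_col (mat k k (\<lambda>(r,c). nu i * Y $$ (i,r) * Y $$ (i,c)))"
    hence r: "r < k" and c: "c < k" by auto
    show "info_mat Y nu (wpath w i 1) $$ (r,c) =
        mat k k (\<lambda>(r,c). nu i * Y $$ (i,r) * Y $$ (i,c)) $$ (r,c)"
      unfolding info_mat_wpath_entry[OF Y r c i, where x = 1] using r c by simp
  qed (use info_mat_carrier[OF Y, of nu "wpath w i 1"] in auto)
  thus ?thesis using det_rank_one_eq_0[OF k] by (simp add: fdet_def)
qed

text \<open>Recovers the coefficient of an affine-along-the-path determinant from its values at
  w i and 0, or at 1/2 and 0 when w i = 0: this is where the formulas for a and b come from.\<close>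
lemma path_coeff_eq:
  fixes g :: "real \<Rightarrow> real"
  assumes k: "k \<ge> 1" and wi: "0 \<le> wi" "wi < 1"
    and g: "\<And>x. 0 \<le> x \<Longrightarrow> x < 1 \<Longrightarrow> g x = (1 - x)^k * g 0 + x * (1 - x)^(k-1) * \<alpha>"
  shows "(if wi = 0 then 2^k * g (1/2) - g 0
      else (g wi - g 0 * (1 - wi)^k) / (wi * (1 - wi)^(k-1))) = \<alpha>"
proof (cases "wi = 0")
  case True
  have "g (1/2) = (1/2)^k * g 0 + (1/2) * (1/2)^(k-1) * \<alpha>" using g[of "1/2"] by simp
  hence "2^k * g (1/2) = g 0 + \<alpha>" using k by (cases k) (simp_all add: field_simps)
  thus ?thesis using True by simp
next
  case False
  have "g wi - g 0 * (1 - wi)^k = wi * (1 - wi)^(k-1) * \<alpha>" using g[of wi] wi by simp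
  moreover have "wi * (1 - wi)^(k-1) > 0" using False wi by simp
  ultimately show ?thesis using False wi by (simp add: field_simps)
qed

lemma b_const_eq: "w i < 1 \<Longrightarrow> b_const Y nu w i = fdet Y nu (wpath w i 0)"
  using wpath_at_weight[of w i] by (cases "w i = 0") (simp_all add: b_const_def)

lemma fdet_wpath_eq:
  assumes Y: "Y \<in> carrier_mat m k" and k: "k \<ge> 1" and i: "i < m" and wi: "0 \<le> w i" "w i < 1"
    and x: "0 \<le> x" "x < 1"
  shows "fdet Y nu (wpath w i x) =
    (1 - x)^k * b_const Y nu w i + x * (1 - x)^(k-1) * a_const Y nu w i"
proof -
  obtain \<alpha> where \<alpha>: "\<And>x. x \<noteq> 1 \<Longrightarrow>
      fdet Y nu (wpath w i x) = (1 - x)^k * fdet Y nu (wpath w i 0) + x * (1 - x)^(k-1) * \<alpha>"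
    using fdet_wpath_affine[OF Y k i] by metis
  have g: "fdet Y nu (wpath w i x) = (1 - x)^k * fdet Y nu (wpath w i 0) + x * (1 - x)^(k-1) * \<alpha>"
    if "0 \<le> x" "x < 1" for x
    by (rule \<alpha>) (use that in simp)
  have b: "b_const Y nu w i = fdet Y nu (wpath w i 0)" by (rule b_const_eq[of w i, OF wi(2)])
  have "a_const Y nu w i =
      (if w i = 0 then 2^k * fdet Y nu (wpath w i (1/2)) - fdet Y nu (wpath w i 0)
       else (fdet Y nu (wpath w i (w i)) - fdet Y nu (wpath w i 0) * (1 - w i)^k)
         / (w i * (1 - w i)^(k-1)))"
    using Y by (simp add: a_const_def Let_def b wpath_at_weight[of w i, OF wi(2)])
  also have "\<dots> = \<alpha>"
    by (rule path_coeff_eq[OF k wi, of "\<lambda>x. fdet Y nu (wpath w i x)", OF g])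
  finally show ?thesis using g[OF x] b by simp
qed

lemma aj_const_eq_a_const: "aj_const X nu w i j = a_const (del_col X j) nu w i"
  and bj_const_eq_b_const: "bj_const X nu w i j = b_const (del_col X j) nu w i"
proof -
  have "dim_col (del_col X j) = dim_col X - 1" "dim_col X - 2 = dim_col X - 1 - 1"
    by (auto simp: del_col_def)
  thus "aj_const X nu w i j = a_const (del_col X j) nu w i"
    and "bj_const X nu w i j = b_const (del_col X j) nu w i"
    by (simp_all add: aj_const_def a_const_def bj_const_def b_const_def fdet_minus_def Let_def)
qed

lemma nonpos_if_le_linear:
  fixes c d :: real
  assumes le: "\<And>x. 0 < x \<Longrightarrow> x < 1 \<Longrightarrow> (1 - x) * c \<le> d * x"
  shows "c \<le> 0"
proof (rule ccontr)
  assume "\<not> c \<le> 0"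
  define x where "x = c / (2 * (c + \<bar>d\<bar>))"
  have c: "c > 0" using \<open>\<not> c \<le> 0\<close> by simp
  have x: "0 < x" "x \<le> 1/2" unfolding x_def using c by (auto simp: field_simps)
  have "d * x \<le> \<bar>d\<bar> * x" using x by (simp add: mult_right_mono)
  also have "\<bar>d\<bar> * x < c / 2" unfolding x_def using c by (simp add: field_simps)
  also have "c / 2 \<le> (1 - x) * c" using x c by (simp add: field_simps)
  finally show False using le[of x] x by simp
qed

lemma path_coeffs_nonneg:
  assumes Y: "Y \<in> carrier_mat m k" and k: "k \<ge> 1" and i: "i < m"
    and w: "\<forall>l<m. 0 \<le> w l" and wi: "w i < 1" and nu: "\<forall>l<m. 0 \<le> nu l"
  shows "b_const Y nu w i \<ge> 0" and "a_const Y nu w i \<ge> 0"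
proof -
  let ?b = "b_const Y nu w i" and ?a = "a_const Y nu w i"
  have nonneg: "(1 - x) * ?b + x * ?a \<ge> 0" if "0 \<le> x" "x < 1" for x
  proof -
    have "0 \<le> fdet Y nu (wpath w i x)"
      using fdet_nonneg[OF Y wpath_weights_nonneg[OF w nu wi]] that by simp
    also have "\<dots> = (1 - x)^(k-1) * ((1 - x) * ?b + x * ?a)"
      using fdet_wpath_eq[where w = w, OF Y k i _ wi that] w i k
      by (cases k) (auto simp: algebra_simps)
    finally have "0 \<le> (1 - x)^(k-1) * ((1 - x) * ?b + x * ?a)" .
    moreover have "(1 - x)^(k-1) > 0" using that by simp
    ultimately show ?thesis by (simp add: zero_le_mult_iff)
  qed
  show "?b \<ge> 0" using nonneg[of 0] by simp
  show "?a \<ge> 0"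
    using nonpos_if_le_linear[of "- ?a" ?b] nonneg[of "1 - x" for x] by (simp add: algebra_simps)
qed

section \<open>The one-dimensional problem\<close>

lemma between_if_sq_diff_prod_neg:
  fixes t A B :: real
  assumes "0 \<le> t" "0 \<le> A" "0 \<le> B" and neg: "(t\<^sup>2 - A\<^sup>2) * (t\<^sup>2 - B\<^sup>2) < 0"
  shows "min A B < t \<and> t < max A B"
proof -
  have "(t - A) * (t - B) * ((t + A) * (t + B)) < 0"
    using neg by (simp add: power2_eq_square algebra_simps)
  moreover have "(t + A) * (t + B) \<ge> 0" using assms by simp
  ultimately have "(t - A) * (t - B) < 0" by (smt (verit) mult_nonneg_nonneg mult_nonpos_nonneg)
  thus ?thesis by (auto simp: mult_less_0_iff)
qed

lemma interior_max_gap: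
  fixes A B c d t ts P :: real
  assumes t: "t > 0" and AB: "A \<noteq> B" and Ac: "A * c = d * ts\<^sup>2"
    and P: "P * (A - B)\<^sup>2 = (A - t) * (d * t - c)"
  shows "(A * d + c - 2 * d * ts) / (A - B)\<^sup>2 - P / t = d * (t - ts)\<^sup>2 / ((A - B)\<^sup>2 * t)"
proof -
  have "(A * d + c - 2 * d * ts) * t - (A - t) * (d * t - c) = d * (t - ts)\<^sup>2"
    using Ac by (simp add: algebra_simps power2_eq_square)
  moreover have "P = (A - t) * (d * t - c) / (A - B)\<^sup>2" using P AB by (simp add: field_simps)
  ultimately show ?thesis using t AB by (simp add: field_simps)
qed

lemma interior_root_between:
  fixes a b A B :: real
  assumes AB: "A \<noteq> B" and A: "A > 0" and B: "B > 0" and ab: "a > b" and b: "b \<ge> 0"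
    and c: "a * B > b * A" and dB: "b * A < (a - b) * B"
  shows "min A B < sqrt (A * (a * B - b * A) / (a - b)) \<and>
    sqrt (A * (a * B - b * A) / (a - b)) < max A B"
proof -
  define ts where "ts = sqrt (A * (a * B - b * A) / (a - b))"
  have ts0: "ts \<ge> 0" and tsq: "ts\<^sup>2 = A * (a * B - b * A) / (a - b)"
    unfolding ts_def using c ab A by simp_all
  have "(ts\<^sup>2 - A\<^sup>2) * (ts\<^sup>2 - B\<^sup>2) = - (A * a * (A - B)\<^sup>2 * ((a - b) * B - b * A)) / (a - b)\<^sup>2"
    unfolding tsq using ab by (simp add: field_simps power2_eq_square)
  also have "\<dots> < 0" using A ab b AB dB by simp
  finally show ?thesis
    using between_if_sq_diff_prod_neg[of ts A B] ts0 A B unfolding ts_def by simp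
qed

lemma unique_max_on01_interior_distinct:
  fixes a b A B :: real and h :: "real \<Rightarrow> real"
  assumes AB: "A \<noteq> B" and A: "A > 0" and B: "B > 0" and ab: "a > b" and b: "b \<ge> 0"
    and c: "a * B > b * A" and dB: "b * A < (a - b) * B"
    and h: "\<And>x. 0 \<le> x \<Longrightarrow> x \<le> 1 \<Longrightarrow> h x = (1 - x) * ((1 - x) * b + x * a) / ((1 - x) * B + x * A)"
  shows "let ts = sqrt (A * (a * B - b * A) / (a - b)) in
        min A B < ts \<and> ts < max A B \<and>
        0 < (ts - B) / (A - B) \<and> (ts - B) / (A - B) < 1 \<and>
        unique_max_on01 h ((ts - B) / (A - B))
          (((sqrt (A * (a - b)) - sqrt (a * B - b * A)) / (A - B))\<^sup>2)"
proof -
  define c where "c = a * B - b * A"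
  define d where "d = a - b"
  define ts where "ts = sqrt (A * c / d)"
  define xs where "xs = (ts - B) / (A - B)"
  define V where "V = ((sqrt (A * d) - sqrt c) / (A - B))\<^sup>2"
  have c0: "c > 0" and d0: "d > 0" using c ab unfolding c_def d_def by auto
  have ts0: "ts > 0" and tsq: "ts\<^sup>2 = A * c / d" unfolding ts_def using c0 d0 A by simp_all
  have Ac: "A * c = d * ts\<^sup>2" using tsq d0 by (simp add: field_simps)
  have between: "min A B < ts \<and> ts < max A B"
    using interior_root_between[OF AB A B ab b c dB] unfolding ts_def c_def d_def .
  hence xs01: "0 < xs \<and> xs < 1"
    using AB unfolding xs_def by (cases "A > B") (auto simp: field_simps)
  have t: "(1 - x) * B + x * A = ts \<longleftrightarrow> x = xs" for x
    using AB unfolding xs_def by (auto simp: field_simps)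
  have "sqrt (A * d) * sqrt c = d * ts"
    using tsq d0 c0 A ts0
    by (simp add: real_sqrt_mult[symmetric] real_sqrt_unique field_simps power2_eq_square)
  hence V: "V = (A * d + c - 2 * d * ts) / (A - B)\<^sup>2"
    using A d0 c0 unfolding V_def by (simp add: power_divide power2_diff)
  have gap: "V - h x = d * (((1 - x) * B + x * A) - ts)\<^sup>2 / ((A - B)\<^sup>2 * ((1 - x) * B + x * A))"
    and tpos: "(1 - x) * B + x * A > 0" if x: "0 \<le> x" "x \<le> 1" for x
  proof -
    show tpos: "(1 - x) * B + x * A > 0"
      using x A B by (smt (verit) mult_nonneg_nonneg mult_pos_pos)
    have "(1 - x) * ((1 - x) * b + x * a) * (A - B)\<^sup>2 =
        (A - ((1 - x) * B + x * A)) * (d * ((1 - x) * B + x * A) - c)"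
      unfolding c_def d_def by (simp add: algebra_simps power2_eq_square)
    with tpos
    show "V - h x = d * (((1 - x) * B + x * A) - ts)\<^sup>2 / ((A - B)\<^sup>2 * ((1 - x) * B + x * A))"
      unfolding V h[OF x] by (rule interior_max_gap[OF _ AB Ac])
  qed
  have "unique_max_on01 h xs V"
    unfolding unique_max_on01_def
  proof (intro conjI allI impI)
    show "0 \<le> xs" "xs \<le> 1" "h xs = V" using gap[of xs] xs01 t[of xs] by auto
    fix x assume "0 \<le> x \<and> x \<le> 1 \<and> x \<noteq> xs"
    hence "d * (((1 - x) * B + x * A) - ts)\<^sup>2 / ((A - B)\<^sup>2 * ((1 - x) * B + x * A)) > 0"
      using d0 AB tpos[of x] t[of x] by (intro divide_pos_pos mult_pos_pos) auto
    thus "h x < V" using gap[of x] \<open>0 \<le> x \<and> x \<le> 1 \<and> x \<noteq> xs\<close> by auto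
  qed
  thus ?thesis using between xs01 unfolding Let_def ts_def xs_def c_def d_def V_def by auto
qed

lemma unique_max_on01_interior_equal:
  fixes a b B :: real and h :: "real \<Rightarrow> real"
  assumes B: "B > 0" and b: "b \<ge> 0" and a2b: "a > 2 * b"
    and h: "\<And>x. 0 \<le> x \<Longrightarrow> x \<le> 1 \<Longrightarrow> h x = (1 - x) * ((1 - x) * b + x * a) / ((1 - x) * B + x * B)"
  shows "a\<^sup>2 / (4 * (a - b) * B) > 0 \<and>
       0 < (a - 2 * b) / (2 * a - 2 * b) \<and> (a - 2 * b) / (2 * a - 2 * b) < 1 \<and>
       unique_max_on01 h ((a - 2 * b) / (2 * a - 2 * b)) (a\<^sup>2 / (4 * (a - b) * B))"
proof -
  define xs where "xs = (a - 2 * b) / (2 * a - 2 * b)"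
  have d: "a - b > 0" using a2b b by linarith
  have gap: "a\<^sup>2 / (4 * (a - b) * B) - h x = (a - b) * (x - xs)\<^sup>2 / B" if x: "0 \<le> x" "x \<le> 1" for x
  proof -
    define P where "P = (1 - x) * ((1 - x) * b + x * a)"
    have "a\<^sup>2 - 4 * (a - b) * P = (2 * (a - b) * x - (a - 2 * b))\<^sup>2"
      unfolding P_def by (simp add: power2_eq_square algebra_simps)
    also have "2 * (a - b) * x - (a - 2 * b) = 2 * (a - b) * (x - xs)"
      unfolding xs_def using d by (simp add: field_simps)
    also have "(2 * (a - b) * (x - xs))\<^sup>2 = 4 * (a - b) * ((a - b) * (x - xs)\<^sup>2)"
      by (simp add: power2_eq_square algebra_simps)
    finally have "a\<^sup>2 / (4 * (a - b)) - P = (a - b) * (x - xs)\<^sup>2"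
      using d by (simp add: field_simps)
    moreover have "h x = P / B" unfolding h[OF x] P_def by (simp add: algebra_simps)
    ultimately show ?thesis by (metis diff_divide_distrib divide_divide_eq_left)
  qed
  have x01: "0 < xs" "xs < 1" unfolding xs_def using a2b b d by (simp_all add: field_simps)
  have "unique_max_on01 h xs (a\<^sup>2 / (4 * (a - b) * B))"
    unfolding unique_max_on01_def
  proof (intro conjI allI impI)
    show "0 \<le> xs" "xs \<le> 1" using x01 by auto
    show "h xs = a\<^sup>2 / (4 * (a - b) * B)" using gap[of xs] x01 by simp
    fix x assume "0 \<le> x \<and> x \<le> 1 \<and> x \<noteq> xs"
    moreover have "(a - b) * (x - xs)\<^sup>2 / B > 0" if "x \<noteq> xs" using d B that by simp
    ultimately show "h x < a\<^sup>2 / (4 * (a - b) * B)" using gap[of x] by fastforce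
  qed
  moreover have "a\<^sup>2 / (4 * (a - b) * B) > 0" using a2b b d B by simp
  ultimately show ?thesis using x01 unfolding xs_def by auto
qed

lemma unique_max_on01_at_0:
  fixes a b A B :: real and h :: "real \<Rightarrow> real"
  assumes b: "b > 0" and B: "B > 0" and A: "A \<ge> 0"
    and h: "\<And>x. 0 \<le> x \<Longrightarrow> x \<le> 1 \<Longrightarrow> h x = (1 - x) * ((1 - x) * b + x * a) / ((1 - x) * B + x * A)"
    and gap: "\<And>x. 0 < x \<Longrightarrow> x < 1 \<Longrightarrow> (a - b) * B * (1 - x) < b * A"
  shows "unique_max_on01 h 0 (b / B)"
  unfolding unique_max_on01_def
proof (intro conjI allI impI)
  show "(0::real) \<le> 0" "(0::real) \<le> 1" "h 0 = b / B" using h[of 0] by simp_all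
  fix x :: real assume "0 \<le> x \<and> x \<le> 1 \<and> x \<noteq> 0"
  hence x: "0 < x" "x \<le> 1" by auto
  show "h x < b / B"
  proof (cases "x = 1")
    case True
    thus ?thesis using h[of 1] b B by simp
  next
    case False
    hence x1: "x < 1" using x by simp
    define t where "t = (1 - x) * B + x * A"
    define P where "P = (1 - x) * ((1 - x) * b + x * a)"
    have t0: "t > 0" unfolding t_def using x1 x B A by (smt (verit) mult_nonneg_nonneg mult_pos_pos)
    have "b * t - B * P = x * (b * A - (a - b) * B * (1 - x))"
      unfolding t_def P_def by (simp add: algebra_simps)
    also have "\<dots> > 0" using gap[OF x(1) x1] x by simp
    finally have "B * P < b * t" by simp
    moreover have "h x = P / t" using h[of x] x unfolding t_def P_def by simp
    ultimately have "(B * h x) * t < b * t" using t0 by (simp add: mult.commute)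
    hence "B * h x < b" using t0 by simp
    thus ?thesis using B by (simp add: field_simps)
  qed
qed

lemma at_0_case_conditions:
  fixes a b A B :: real
  assumes nn: "a \<ge> 0" "b \<ge> 0" "A \<ge> 0" "B > 0" and A0: "A = 0 \<Longrightarrow> a = 0"
    and ab: "a > 0 \<or> b > 0"
    and n1: "\<not> (A \<noteq> B \<and> A > 0 \<and> B > 0 \<and> a > b \<and> a * B > b * A \<and> b * A < (a - b) * B)"
    and n2: "\<not> (A = B \<and> a > 2 * b)"
  shows "b > 0" and "\<And>x. 0 < x \<Longrightarrow> x < 1 \<Longrightarrow> (a - b) * B * (1 - x) < b * A"
proof -
  show b0: "b > 0"
  proof (rule ccontr)
    assume "\<not> b > 0"
    hence "b = 0" and "a > 0" using nn ab by auto
    moreover hence "A > 0" using A0 nn by force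
    ultimately show False using n1 n2 nn by (cases "A = B") auto
  qed
  fix x :: real assume x: "0 < x" "x < 1"
  consider "a < b" | "a = b" | "a > b" by linarith
  thus "(a - b) * B * (1 - x) < b * A"
  proof cases
    case 1
    thus ?thesis using nn x by (smt (verit) mult_neg_pos mult_nonneg_nonneg)
  next
    case 2
    hence "A > 0" using A0 b0 nn by force
    thus ?thesis using 2 b0 by simp
  next
    case 3
    hence "A > 0" using A0 nn by force
    have "(a - b) * B \<le> b * A"
    proof (cases "A = B")
      case True
      thus ?thesis using n2 nn by (simp add: algebra_simps mult_right_mono)
    next
      case False
      hence "a * B \<le> b * A \<or> (a - b) * B \<le> b * A" using n1 \<open>A > 0\<close> nn 3 by auto
      moreover have "(a - b) * B \<le> a * B" using nn by simp
      ultimately show ?thesis by linarith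
    qed
    moreover have "(a - b) * B * (1 - x) < (a - b) * B" using 3 nn x by simp
    ultimately show ?thesis by linarith
  qed
qed

text \<open>Case (3) is vacuous under B > 0, which always holds in the design setting (see B_pos).\<close>
lemma unique_max_on01_cases:
  fixes a b A B :: real and h :: "real \<Rightarrow> real"
  assumes nn: "a \<ge> 0" "b \<ge> 0" "A \<ge> 0" "B > 0" and A0: "A = 0 \<Longrightarrow> a = 0"
    and ab: "a > 0 \<or> b > 0"
    and h: "\<And>x. 0 \<le> x \<Longrightarrow> x \<le> 1 \<Longrightarrow> h x = (1 - x) * ((1 - x) * b + x * a) / ((1 - x) * B + x * A)"
  shows
    "(A \<noteq> B \<and> A > 0 \<and> B > 0 \<and> a > b \<and> a * B > b * A \<and> b * A < (a - b) * B \<longrightarrow>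
       (let ts = sqrt (A * (a * B - b * A) / (a - b)) in
        min A B < ts \<and> ts < max A B \<and>
        0 < (ts - B) / (A - B) \<and> (ts - B) / (A - B) < 1 \<and>
        unique_max_on01 h ((ts - B) / (A - B))
          (((sqrt (A * (a - b)) - sqrt (a * B - b * A)) / (A - B))^2)))
   \<and> (A = B \<and> a > 2 * b \<longrightarrow>
       a^2 / (4 * (a - b) * B) > 0 \<and>
       0 < (a - 2 * b) / (2 * a - 2 * b) \<and> (a - 2 * b) / (2 * a - 2 * b) < 1 \<and>
       unique_max_on01 h ((a - 2 * b) / (2 * a - 2 * b)) (a^2 / (4 * (a - b) * B)))
   \<and> (A \<noteq> B \<and> B = 0 \<and> b = 0 \<longrightarrow>
       a / A > 0 \<and> unique_max_on01 h 0 (a / A))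
   \<and> (\<not> (A \<noteq> B \<and> A > 0 \<and> B > 0 \<and> a > b \<and> a * B > b * A \<and> b * A < (a - b) * B)
      \<and> \<not> (A = B \<and> a > 2 * b) \<and> \<not> (A \<noteq> B \<and> B = 0 \<and> b = 0) \<longrightarrow>
       b / B > 0 \<and> unique_max_on01 h 0 (b / B))"
proof (intro conjI impI)
  assume "A \<noteq> B \<and> A > 0 \<and> B > 0 \<and> a > b \<and> a * B > b * A \<and> b * A < (a - b) * B"
  thus "let ts = sqrt (A * (a * B - b * A) / (a - b)) in
        min A B < ts \<and> ts < max A B \<and>
        0 < (ts - B) / (A - B) \<and> (ts - B) / (A - B) < 1 \<and>
        unique_max_on01 h ((ts - B) / (A - B))
          (((sqrt (A * (a - b)) - sqrt (a * B - b * A)) / (A - B))^2)"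
    using unique_max_on01_interior_distinct[of A B b a h] nn h by blast
next
  assume "A = B \<and> a > 2 * b"
  thus "a^2 / (4 * (a - b) * B) > 0" "0 < (a - 2 * b) / (2 * a - 2 * b)"
    "(a - 2 * b) / (2 * a - 2 * b) < 1"
    "unique_max_on01 h ((a - 2 * b) / (2 * a - 2 * b)) (a^2 / (4 * (a - b) * B))"
    using unique_max_on01_interior_equal[of B b a h] nn h by auto
next
  assume "A \<noteq> B \<and> B = 0 \<and> b = 0"
  thus "a / A > 0" "unique_max_on01 h 0 (a / A)" using nn by auto
next
  assume "\<not> (A \<noteq> B \<and> A > 0 \<and> B > 0 \<and> a > b \<and> a * B > b * A \<and> b * A < (a - b) * B)
      \<and> \<not> (A = B \<and> a > 2 * b) \<and> \<not> (A \<noteq> B \<and> B = 0 \<and> b = 0)"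
  hence "b > 0" and "\<And>x. 0 < x \<Longrightarrow> x < 1 \<Longrightarrow> (a - b) * B * (1 - x) < b * A"
    using at_0_case_conditions[OF nn A0 ab] by blast+
  thus "b / B > 0" "unique_max_on01 h 0 (b / B)"
    using unique_max_on01_at_0[of b B A h a] nn h by auto
qed

section \<open>The design setting\<close>

locale design_path =
  fixes X :: "real mat" and nu w :: "nat \<Rightarrow> real" and m p i :: nat
  assumes X: "X \<in> carrier_mat m p" and p2: "p \<ge> 2"
    and nu: "\<forall>l<m. nu l \<ge> 0" and w: "\<forall>l<m. 0 \<le> w l \<and> w l < 1"
    and fpos: "fdet X nu w > 0" and i: "i < m"
begin

abbreviation "a \<equiv> a_const X nu w i"
abbreviation "b \<equiv> b_const X nu w i"
abbreviation "A \<equiv> A_const X nu w i"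
abbreviation "B \<equiv> B_const X nu w i"

lemma w_i_bounds: "0 \<le> w i" "w i < 1"
  using w i by auto

lemma p_Suc_Suc: obtains q where "p = Suc (Suc q)"
  using p2 by (metis add_2_eq_Suc le_Suc_ex)

lemma path_weights_nonneg: "0 \<le> x \<Longrightarrow> x \<le> 1 \<Longrightarrow> \<forall>l<m. 0 \<le> wpath w i x l * nu l"
  using wpath_weights_nonneg[of m w nu i x] w nu w_i_bounds by auto

lemma fdet_path:
  assumes "0 \<le> x" "x < 1"
  shows "fdet X nu (wpath w i x) = (1 - x)^(p-1) * ((1 - x) * b + x * a)"
proof -
  obtain q where q: "p = Suc (Suc q)" by (rule p_Suc_Suc)
  show ?thesis
    using fdet_wpath_eq[where w = w, OF X _ i w_i_bounds assms] by (simp add: q algebra_simps)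
qed

lemma sum_fdet_minus_path:
  assumes x: "0 \<le> x" "x < 1"
  shows "(\<Sum>j<p. fdet_minus X nu (wpath w i x) j) = (1 - x)^(p-2) * ((1 - x) * B + x * A)"
proof -
  have eq: "fdet_minus X nu (wpath w i x) j =
      (1 - x)^(p-2) * ((1 - x) * bj_const X nu w i j + x * aj_const X nu w i j)" for j
  proof -
    have "fdet (del_col X j) nu (wpath w i x) = (1 - x)^(p-1) * bj_const X nu w i j
        + x * (1 - x)^(p-1-1) * aj_const X nu w i j"
      unfolding aj_const_eq_a_const bj_const_eq_b_const
      using fdet_wpath_eq[where w = w, OF del_col_carrier[OF X] _ i w_i_bounds x] p2 by simp
    moreover obtain q where "p = Suc (Suc q)" by (rule p_Suc_Suc)
    ultimately show ?thesis by (simp add: fdet_minus_def algebra_simps)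
  qed
  have "(\<Sum>j<p. fdet_minus X nu (wpath w i x) j)
      = (\<Sum>j<p. (1 - x)^(p-2) * ((1 - x) * bj_const X nu w i j + x * aj_const X nu w i j))"
    by (simp only: eq)
  also have "\<dots> = (1 - x)^(p-2) * ((1 - x) * B + x * A)"
    unfolding A_const_def B_const_def carrier_matD(2)[OF X]
    by (simp add: sum_distrib_left sum.distrib distrib_left mult.assoc)
  finally show ?thesis .
qed

lemma hfun_path:
  assumes x: "0 \<le> x" "x \<le> 1"
  shows "hfun X nu (wpath w i x) = (1 - x) * ((1 - x) * b + x * a) / ((1 - x) * B + x * A)"
proof (cases "x = 1")
  case True
  thus ?thesis
    using hfun_eq_fdet_div[OF X path_weights_nonneg[OF x]] fdet_wpath_one[OF X p2 i] by simp
next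
  case False
  hence x1: "x < 1" using x by simp
  obtain q where q: "p = Suc (Suc q)" by (rule p_Suc_Suc)
  have "hfun X nu (wpath w i x) = ((1 - x)^q * ((1 - x) * ((1 - x) * b + x * a))) /
      ((1 - x)^q * ((1 - x) * B + x * A))"
    unfolding hfun_eq_fdet_div[OF X path_weights_nonneg[OF x]] fdet_path[OF x(1) x1]
      sum_fdet_minus_path[OF x(1) x1] by (simp add: q)
  also have "\<dots> = (1 - x) * ((1 - x) * b + x * a) / ((1 - x) * B + x * A)"
    using x1 by (intro mult_divide_mult_cancel_left) simp
  finally show ?thesis .
qed

lemma coeffs_nonneg: "a \<ge> 0" "b \<ge> 0" "A \<ge> 0" "B \<ge> 0"
proof -
  have X': "del_col X j \<in> carrier_mat m (p - 1)" for j by (rule del_col_carrier[OF X])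
  have "p - 1 \<ge> 1" using p2 by simp
  thus "A \<ge> 0" "B \<ge> 0"
    using path_coeffs_nonneg[where w = w and nu = nu, OF X' _ i _ w_i_bounds(2)] w nu
    by (auto simp: A_const_def B_const_def aj_const_eq_a_const bj_const_eq_b_const
        intro!: sum_nonneg)
  show "a \<ge> 0" "b \<ge> 0"
    using path_coeffs_nonneg[where w = w and nu = nu, OF X _ i _ w_i_bounds(2)] w nu p2 by auto
qed

lemma numerator_at_weight_pos: "(1 - w i) * b + w i * a > 0"
proof -
  have "0 < fdet X nu (wpath w i (w i))" using fpos wpath_at_weight[of w i] w_i_bounds by simp
  thus ?thesis unfolding fdet_path[OF w_i_bounds] using w_i_bounds by (simp add: zero_less_mult_iff)
qed

lemma a_pos_or_b_pos: "a > 0 \<or> b > 0"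
proof (rule ccontr)
  assume "\<not> (a > 0 \<or> b > 0)"
  hence "a = 0" "b = 0" using coeffs_nonneg(1,2) by auto
  thus False using numerator_at_weight_pos by simp
qed

lemma denominator_pos:
  assumes x: "0 \<le> x" "x < 1" and N: "(1 - x) * b + x * a > 0"
  shows "(1 - x) * B + x * A > 0"
proof -
  have f: "fdet X nu (wpath w i x) > 0" using N x by (simp add: fdet_path)
  have "0 < hfun X nu (wpath w i x)"
    using hfun_pos[OF X _ path_weights_nonneg f] x p2 by simp
  moreover have "hfun X nu (wpath w i x) =
      fdet X nu (wpath w i x) / (\<Sum>j<p. fdet_minus X nu (wpath w i x) j)"
    using hfun_eq_fdet_div[OF X path_weights_nonneg] x by simp
  ultimately have "0 < (\<Sum>j<p. fdet_minus X nu (wpath w i x) j)"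
    using f by (simp add: zero_less_divide_iff)
  thus ?thesis unfolding sum_fdet_minus_path[OF x] using x by (simp add: zero_less_mult_iff)
qed

lemma path_quad_bound:
  assumes x: "0 \<le> x" "x < 1"
  shows "(1 - x) * ((1 - x) * b + x * a) * (\<Sum>r<p. (u r)\<^sup>2)
    \<le> bilin_form (info_mat X nu (wpath w i x)) u u * ((1 - x) * B + x * A)"
proof -
  have nn: "\<forall>l<m. 0 \<le> wpath w i x l * nu l" using path_weights_nonneg x by simp
  have q: "bilin_form (info_mat X nu (wpath w i x)) u u \<ge> 0" by (rule info_mat_quad_nonneg[OF X nn])
  have N: "(1 - x) * b + x * a \<ge> 0" and D: "(1 - x) * B + x * A \<ge> 0"
    using coeffs_nonneg x by simp_all
  show ?thesis
  proof (cases "(1 - x) * b + x * a = 0")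
    case True thus ?thesis using q D by simp
  next
    case False
    hence D0: "(1 - x) * B + x * A > 0" using denominator_pos[OF x] N by simp
    have "hfun X nu (wpath w i x) * (\<Sum>r<p. (u r)\<^sup>2) \<le> bilin_form (info_mat X nu (wpath w i x)) u u"
      by (rule hfun_mult_sumsq_le[OF X nn])
    thus ?thesis using D0 x unfolding hfun_path[OF x(1) less_imp_le[OF x(2)]]
      by (simp add: field_simps)
  qed
qed

text \<open>If b = B = 0, a kernel vector u of the information matrix at 0 has quadratic form linear in x
  along the path, which forces a = 0 as x \<rightarrow> 0; but a = b = 0 contradicts f(w) > 0.\<close>
lemma B_pos: "B > 0"
proof (cases "b > 0")
  case True
  thus ?thesis using denominator_pos[of 0] by simp
next
  case False
  hence b0: "b = 0" using coeffs_nonneg by simp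
  show ?thesis
  proof (rule ccontr)
    assume "\<not> B > 0"
    hence B0: "B = 0" using coeffs_nonneg by simp
    have "det (info_mat X nu (wpath w i 0)) = 0"
      using b0 b_const_eq[of w i X nu] w_i_bounds by (simp add: fdet_def)
    then obtain u where u0: "bilin_form (info_mat X nu (wpath w i 0)) u u = 0"
      and U: "(\<Sum>r<p. (u r)\<^sup>2) > 0"
      using singular_imp_isotropic[OF info_mat_carrier[OF X]] by metis
    define K where "K = nu i * (\<Sum>r<p. X $$ (i,r) * u r)\<^sup>2"
    have "(1 - x) * (a * (\<Sum>r<p. (u r)\<^sup>2)) \<le> (K * A) * x" if x: "0 < x" "x < 1" for x
    proof -
      have "x * ((1 - x) * (a * (\<Sum>r<p. (u r)\<^sup>2))) \<le> x * ((K * A) * x)"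
        using path_quad_bound[of x u] x b0 B0 u0
        by (simp add: bilin_form_info_mat_wpath[OF X i, where x = x] K_def algebra_simps)
      thus ?thesis using x by simp
    qed
    hence "a * (\<Sum>r<p. (u r)\<^sup>2) \<le> 0" by (rule nonpos_if_le_linear)
    hence "a = 0" using U coeffs_nonneg by (simp add: mult_le_0_iff)
    thus False using numerator_at_weight_pos b0 by simp
  qed
qed

text \<open>If A = 0, a vector u orthogonal to the i-th design point has quadratic form proportional to
  1 - x along the path, which forces a = 0 as x \<rightarrow> 1.\<close>
lemma a_zero_if_A_zero:
  assumes A0: "A = 0"
  shows "a = 0"
proof -
  obtain u where u: "(\<Sum>r<p. X $$ (i,r) * u r) = 0" and U: "(\<Sum>r<p. (u r)\<^sup>2) > 0"
    using exists_orthogonal[OF p2] by metis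
  define Q where "Q = bilin_form (info_mat X nu (wpath w i 0)) u u"
  have "(1 - y) * (a * (\<Sum>r<p. (u r)\<^sup>2)) \<le> (Q * B) * y" if y: "0 < y" "y < 1" for y
  proof -
    have "(y * b + (1 - y) * a) * (\<Sum>r<p. (u r)\<^sup>2) \<le> Q * (y * B)"
      using path_quad_bound[of "1 - y" u] y A0 u
      by (simp add: bilin_form_info_mat_wpath[OF X i, where x = "1 - y"] Q_def)
    moreover have "(y * b + (1 - y) * a) * (\<Sum>r<p. (u r)\<^sup>2)
        = y * b * (\<Sum>r<p. (u r)\<^sup>2) + (1 - y) * (a * (\<Sum>r<p. (u r)\<^sup>2))"
      by (simp add: algebra_simps)
    moreover have "0 \<le> y * b * (\<Sum>r<p. (u r)\<^sup>2)" using y U coeffs_nonneg by simp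
    ultimately show ?thesis by (simp add: mult_ac)
  qed
  hence "a * (\<Sum>r<p. (u r)\<^sup>2) \<le> 0" by (rule nonpos_if_le_linear)
  thus "a = 0" using U coeffs_nonneg by (simp add: mult_le_0_iff)
qed

end

theorem theorem2:
  fixes X :: "real mat" and nu w :: "nat \<Rightarrow> real" and m p i :: nat
  assumes X: "X \<in> carrier_mat m p"
    and mp: "m > p" and p2: "p \<ge> 2"
    and nu: "\<forall>l<m. nu l \<ge> 0"
    and w: "\<forall>l<m. 0 \<le> w l \<and> w l < 1"
    and wsum: "(\<Sum>l<m. w l) = 1"
    and fpos: "fdet X nu w > 0"
    and i: "i < m"
  defines "a \<equiv> a_const X nu w i" and "b \<equiv> b_const X nu w i"
    and "A \<equiv> A_const X nu w i" and "B \<equiv> B_const X nu w i"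
    and "hi \<equiv> (\<lambda>x. hfun X nu (wpath w i x))"
  shows
    "(A \<noteq> B \<and> A > 0 \<and> B > 0 \<and> a > b \<and> a * B > b * A \<and> b * A < (a - b) * B \<longrightarrow>
       (let ts = sqrt (A * (a * B - b * A) / (a - b)) in
        min A B < ts \<and> ts < max A B \<and>
        0 < (ts - B) / (A - B) \<and> (ts - B) / (A - B) < 1 \<and>
        unique_max_on01 hi ((ts - B) / (A - B))
          (((sqrt (A * (a - b)) - sqrt (a * B - b * A)) / (A - B))^2)))
   \<and> (A = B \<and> a > 2 * b \<longrightarrow>
       a^2 / (4 * (a - b) * B) > 0 \<and>
       0 < (a - 2 * b) / (2 * a - 2 * b) \<and> (a - 2 * b) / (2 * a - 2 * b) < 1 \<and>
       unique_max_on01 hi ((a - 2 * b) / (2 * a - 2 * b)) (a^2 / (4 * (a - b) * B)))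
   \<and> (A \<noteq> B \<and> B = 0 \<and> b = 0 \<longrightarrow>
       a / A > 0 \<and> unique_max_on01 hi 0 (a / A))
   \<and> (\<not> (A \<noteq> B \<and> A > 0 \<and> B > 0 \<and> a > b \<and> a * B > b * A \<and> b * A < (a - b) * B)
      \<and> \<not> (A = B \<and> a > 2 * b) \<and> \<not> (A \<noteq> B \<and> B = 0 \<and> b = 0) \<longrightarrow>
       b / B > 0 \<and> unique_max_on01 hi 0 (b / B))"
proof -
  interpret design_path X nu w m p i using X p2 nu w fpos i by unfold_locales
  show ?thesis
    unfolding a_def b_def A_def B_def hi_def
    by (rule unique_max_on01_cases[OF coeffs_nonneg(1-3) B_pos a_zero_if_A_zero a_pos_or_b_pos
          hfun_path])
qed

end
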